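(* Let $1\le p\le n-1$ and let $a\in R[t_1,\ldots,t_n]$ satisfy $s_p.a=a$. Then $T_pa=aT_p$ in $\mathcal H_{n,r}$.
   Context: Standing setup: $R$ is an integral domain, $n\ge 2$, $r\ge 1$, and $q,u_1,\ldots,u_r\in R$ with $q$ invertible in $R$ and $\Delta:=\prod_{1\le j<i\le r}(u_i-u_j)$ invertible in $R$. For $1\le c\le r$ let $F_c(X)\in R[X]$ be the unique polynomial of degree $\le r-1$ with $F_c(u_{c'})=\delta_{c,c'}\Delta$ for all $1\le c'\le r$. The modified Ariki–Koike (Shoji) algebra $\mathcal H_{n,r}=\mathcal H_{n,r}(R,q,u_1,\ldots,u_r)$ is the associative $R$-algebra generated by $t_1,\ldots,t_n,T_1,\ldots,T_{n-1}$ subject to: $(T_i-q)(T_i+q^{-1})=0$; $(t_i-u_1)\cdots(t_i-u_r)=0$; $T_iT_{i+1}T_i=T_{i+1}T_iT_{i+1}$; $T_iT_j=T_jT_i$ for $|i-j|\ge2$; $t_it_j=t_jt_i$; $T_jt_k=t_kT_j$ for $k\ne j,j+1$; and for $2\le j\le n$: $T_{j-1}t_j=t_{j-1}T_{j-1}+\Delta^{-2}\sum_{1\le c_1<c_2\le r}(u_{c_2}-u_{c_1})(q-q^{-1})F_{c_1}(t_{j-1})F_{c_2}(t_j)$ and $T_{j-1}t_{j-1}=t_jT_{j-1}-\Delta^{-2}\sum_{1\le c_1<c_2\le r}(u_{c_2}-u_{c_1})(q-q^{-1})F_{c_1}(t_{j-1})F_{c_2}(t_j)$. $R[t_1,\ldots,t_n]$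 is the (commutative) subalgebra generated by the $t_i$; it is isomorphic to $R[X_1,\ldots,X_n]/(\prod_{j=1}^r(X_i-u_j):1\le i\le n)$, and the symmetric group $\mathfrak S(n)$ acts on it by $R$-algebra automorphisms via $w.t_i=t_{w(i)}$. $s_p\in\mathfrak S(n)$ is the simple transposition $(p\ p+1)$. *)

theory Defs
  imports "HOL-Computational_Algebra.Polynomial"
begin

definition unit_inv :: "'r::comm_ring_1 \<Rightarrow> 'r" where
  "unit_inv x = (THE y. x * y = 1)"

definition Delta :: "nat \<Rightarrow> (nat \<Rightarrow> 'r::comm_ring_1) \<Rightarrow> 'r" where
  "Delta r u = (\<Prod>i\<in>{1..r}. \<Prod>j\<in>{1..<i}. (u i - u j))"

definition Fpol :: "nat \<Rightarrow> (nat \<Rightarrow> 'r::idom) \<Rightarrow> nat \<Rightarrow> 'r poly" where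
  "Fpol r u c = (THE f. degree f \<le> r - 1 \<and>
      (\<forall>c'\<in>{1..r}. poly f (u c') = (if c = c' then Delta r u else 0)))"

text \<open>R-algebra structure on a (noncommutative) ring: a ring homomorphism with central image.\<close>
definition central_hom :: "('r::comm_ring_1 \<Rightarrow> 'a::ring_1) \<Rightarrow> bool" where
  "central_hom \<phi> \<longleftrightarrow> \<phi> 0 = 0 \<and> \<phi> 1 = 1 \<and> (\<forall>x y. \<phi> (x + y) = \<phi> x + \<phi> y)
     \<and> (\<forall>x y. \<phi> (x * y) = \<phi> x * \<phi> y) \<and> (\<forall>x y. \<phi> x * y = y * \<phi> x)"

definition peval :: "('r::comm_ring_1 \<Rightarrow> 'a::ring_1) \<Rightarrow> 'r poly \<Rightarrow> 'a \<Rightarrow> 'a" where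
  "peval \<phi> f x = (\<Sum>k\<le>degree f. \<phi> (coeff f k) * x ^ k)"

definition corr :: "('r::idom \<Rightarrow> 'a::ring_1) \<Rightarrow> nat \<Rightarrow> 'r \<Rightarrow> (nat \<Rightarrow> 'r)
    \<Rightarrow> (nat \<Rightarrow> 'a) \<Rightarrow> nat \<Rightarrow> 'a" where
  "corr \<phi> r q u t j = (\<Sum>c1\<in>{1..r}. \<Sum>c2\<in>{c1<..r}.
      \<phi> ((unit_inv (Delta r u))^2 * (u c2 - u c1) * (q - unit_inv q))
      * peval \<phi> (Fpol r u c1) (t (j - 1)) * peval \<phi> (Fpol r u c2) (t j))"

text \<open>Elements \<phi>, t_1..t_n, T_1..T_(n-1) of an R-algebra satisfying the defining
  relations of the modified Ariki-Koike (Shoji) algebra H_{n,r}(R,q,u_1..u_r).\<close>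
definition shoji_rels :: "nat \<Rightarrow> nat \<Rightarrow> 'r::idom \<Rightarrow> (nat \<Rightarrow> 'r)
    \<Rightarrow> ('r \<Rightarrow> 'a::ring_1) \<Rightarrow> (nat \<Rightarrow> 'a) \<Rightarrow> (nat \<Rightarrow> 'a) \<Rightarrow> bool" where
  "shoji_rels n r q u \<phi> t T \<longleftrightarrow>
     central_hom \<phi>
   \<and> (\<forall>i\<in>{1..<n}. (T i - \<phi> q) * (T i + \<phi> (unit_inv q)) = 0)
   \<and> (\<forall>i\<in>{1..n}. foldr (\<lambda>c acc. (t i - \<phi> (u c)) * acc) [1..<r+1] 1 = 0)
   \<and> (\<forall>i\<in>{1..<n-1}. T i * T (i+1) * T i = T (i+1) * T i * T (i+1))
   \<and> (\<forall>i\<in>{1..<n}. \<forall>j\<in>{1..<n}. (i + 2 \<le> j \<or> j + 2 \<le> i) \<longrightarrow> T i * T j = T j * T i)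
   \<and> (\<forall>i\<in>{1..n}. \<forall>j\<in>{1..n}. t i * t j = t j * t i)
   \<and> (\<forall>j\<in>{1..<n}. \<forall>k\<in>{1..n}. k \<noteq> j \<and> k \<noteq> j + 1 \<longrightarrow> T j * t k = t k * T j)
   \<and> (\<forall>j\<in>{2..n}. T (j-1) * t j = t (j-1) * T (j-1) + corr \<phi> r q u t j)
   \<and> (\<forall>j\<in>{2..n}. T (j-1) * t (j-1) = t j * T (j-1) - corr \<phi> r q u t j)"

text \<open>Reduced exponent vectors (indices 1..n, exponents < r): the monomials
  t^alpha with alpha in this set form an R-basis of R[t_1..t_n].\<close>
definition red_exps :: "nat \<Rightarrow> nat \<Rightarrow> (nat \<Rightarrow> nat) set" where
  "red_exps n r = {\<alpha>. (\<forall>i\<in>{1..n}. \<alpha> i < r) \<and> (\<forall>i. i \<notin> {1..n} \<longrightarrow> \<alpha> i = 0)}"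

definition monom_t :: "nat \<Rightarrow> (nat \<Rightarrow> 'a::ring_1) \<Rightarrow> (nat \<Rightarrow> nat) \<Rightarrow> 'a" where
  "monom_t n t \<alpha> = foldr (\<lambda>i acc. t i ^ \<alpha> i * acc) [1..<n+1] 1"

definition elem_t :: "nat \<Rightarrow> nat \<Rightarrow> ('r::comm_ring_1 \<Rightarrow> 'a::ring_1) \<Rightarrow> (nat \<Rightarrow> 'a)
    \<Rightarrow> ((nat \<Rightarrow> nat) \<Rightarrow> 'r) \<Rightarrow> 'a" where
  "elem_t n r \<phi> t c = (\<Sum>\<alpha>\<in>red_exps n r. \<phi> (c \<alpha>) * monom_t n t \<alpha>)"

text \<open>Action of s_p on exponent vectors: s_p.(t^alpha) = t^(alpha o s_p).\<close>
definition swap_exp :: "nat \<Rightarrow> (nat \<Rightarrow> nat) \<Rightarrow> (nat \<Rightarrow> nat)" where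
  "swap_exp p \<alpha> = \<alpha>(p := \<alpha> (p + 1), p + 1 := \<alpha> p)"

end

theory Submission imports Defs begin

text \<open>Write \<open>x = t\<^sub>p\<close>, \<open>y = t\<^sub>p\<^sub>+\<^sub>1\<close> and \<open>C\<close> for the correction term. Adding and
  multiplying the two mixed relations shows that \<open>T\<^sub>p\<close> commutes with \<open>x + y\<close> and \<open>x y\<close>,
  hence with every symmetric polynomial in \<open>x, y\<close> (power sums satisfy a recurrence
  with coefficients \<open>x + y\<close> and \<open>x y\<close>). An \<open>s\<^sub>p\<close>-invariant element is a sum of terms
  \<open>c\<^sub>\<alpha> (x\<^sup>i y\<^sup>j + x\<^sup>j y\<^sup>i) m\<close> and \<open>c\<^sub>\<alpha> x\<^sup>i y\<^sup>i m\<close>, where the monomial \<open>m\<close> avoids \<open>t\<^sub>p, t\<^sub>p\<^sub>+\<^sub>1\<close> and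
  so commutes with \<open>T\<^sub>p\<close>.\<close>

definition centralizer :: "'a::ring_1 \<Rightarrow> 'a set" where
  "centralizer a = {b. a * b = b * a}"

lemma centralizer_iff: "b \<in> centralizer a \<longleftrightarrow> a * b = b * a"
  by (simp add: centralizer_def)

lemma centralizer_one: "1 \<in> centralizer a"
  by (simp add: centralizer_def)

lemma centralizer_add: "b \<in> centralizer a \<Longrightarrow> c \<in> centralizer a \<Longrightarrow> b + c \<in> centralizer a"
  by (simp add: centralizer_def distrib_left distrib_right)

lemma centralizer_diff: "b \<in> centralizer a \<Longrightarrow> c \<in> centralizer a \<Longrightarrow> b - c \<in> centralizer a"
  by (simp add: centralizer_def left_diff_distrib right_diff_distrib)

lemma centralizer_mult:
  assumes "b \<in> centralizer a" "c \<in> centralizer a"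
  shows "b * c \<in> centralizer a"
proof -
  have "a * (b * c) = (b * a) * c"
    using assms(1) by (simp add: centralizer_def mult.assoc[symmetric])
  also have "\<dots> = (b * c) * a"
    using assms(2) by (simp add: centralizer_def mult.assoc)
  finally show ?thesis by (simp add: centralizer_def)
qed

lemma centralizer_power: "b \<in> centralizer a \<Longrightarrow> b ^ m \<in> centralizer a"
  by (induction m) (simp_all add: centralizer_one centralizer_mult)

lemma centralizer_sum: "(\<And>x. x \<in> A \<Longrightarrow> f x \<in> centralizer a) \<Longrightarrow> sum f A \<in> centralizer a"
  by (simp add: centralizer_def sum_distrib_left sum_distrib_right)

lemma central_in_centralizer: "\<forall>s b. \<phi> s * b = b * \<phi> s \<Longrightarrow> \<phi> s \<in> centralizer a"
  by (simp add: centralizer_def)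

lemma power_mult_distrib_commuting:
  assumes "(x::'a::ring_1) * y = y * x"
  shows "(x * y) ^ i = x ^ i * y ^ i"
proof (induction i)
  case (Suc i)
  have "(x * y) ^ Suc i = x * (y * x ^ i) * y ^ i"
    using Suc by (simp add: mult.assoc)
  also have "\<dots> = x * (x ^ i * y) * y ^ i"
    using power_commuting_commutes[OF assms, of i] by simp
  also have "\<dots> = x ^ Suc i * y ^ Suc i"
    by (simp add: mult.assoc)
  finally show ?case .
qed simp

text \<open>Summing the two relations gives \<open>x + y\<close>; multiplying them (moving \<open>T\<close> past \<open>x\<close>, then
  past \<open>y\<close>) leaves \<open>y C - C y\<close>, which vanishes.\<close>
lemma sum_prod_in_centralizer_of_twisted:
  fixes x y T C :: "'a::ring_1"
  assumes xy: "x * y = y * x" and Ty: "T * y = x * T + C" and Tx: "T * x = y * T - C"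
    and yC: "y * C = C * y"
  shows "x + y \<in> centralizer T" and "x * y \<in> centralizer T"
proof -
  show "x + y \<in> centralizer T"
    by (simp add: centralizer_def distrib_left distrib_right Ty Tx)
  have "T * (x * y) = (y * T - C) * y"
    by (simp add: Tx mult.assoc[symmetric])
  also have "\<dots> = y * (x * T + C) - C * y"
    by (simp add: left_diff_distrib mult.assoc Ty)
  also have "\<dots> = (x * y) * T"
    by (simp add: distrib_left yC mult.assoc[symmetric] xy)
  finally show "x * y \<in> centralizer T"
    by (simp add: centralizer_def)
qed

lemma power_sum_in_centralizer:
  fixes x y T :: "'a::ring_1"
  assumes xy: "x * y = y * x"
    and s: "x + y \<in> centralizer T" and m: "x * y \<in> centralizer T"
  shows "x ^ d + y ^ d \<in> centralizer T"
proof -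
  define P where "P d = x ^ d + y ^ d" for d
  have rec: "P (Suc (Suc k)) = (x + y) * P (Suc k) - (x * y) * P k" for k
  proof -
    have "y * x ^ k = x ^ k * y"
      using power_commuting_commutes[OF xy, of k] by simp
    moreover have "y * (x * z) = x * (y * z)" for z
      by (simp add: mult.assoc[symmetric] xy)
    ultimately show ?thesis
      unfolding P_def by (simp add: distrib_left distrib_right mult.assoc xy)
  qed
  have "P k \<in> centralizer T \<and> P (Suc k) \<in> centralizer T" for k
  proof (induction k)
    case 0
    have "P 0 \<in> centralizer T"
      by (simp add: P_def centralizer_def mult_2 mult_2_right)
    then show ?case
      using s by (simp add: P_def)
  next
    case (Suc k)
    then show ?case
      unfolding rec by (blast intro: centralizer_diff centralizer_mult s m)
  qed
  then show ?thesis
    unfolding P_def by blast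
qed

lemma symmetric_monomial_in_centralizer:
  fixes x y T :: "'a::ring_1"
  assumes xy: "x * y = y * x"
    and s: "x + y \<in> centralizer T" and m: "x * y \<in> centralizer T"
  shows "x ^ i * y ^ j + x ^ j * y ^ i \<in> centralizer T"
proof -
  have le: "x ^ i * y ^ j + x ^ j * y ^ i \<in> centralizer T" if "i \<le> j" for i j
  proof -
    define d where "d = j - i"
    have j: "j = i + d"
      using that unfolding d_def by simp
    have "y ^ i * x ^ d = x ^ d * y ^ i"
      using power_commuting_commutes[OF power_commuting_commutes[OF xy, symmetric]] by simp
    then have "x ^ i * y ^ j + x ^ j * y ^ i = (x * y) ^ i * (x ^ d + y ^ d)"
      unfolding j power_mult_distrib_commuting[OF xy]
      by (simp add: power_add distrib_left mult.assoc)
    then show ?thesis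
      using centralizer_mult[OF centralizer_power[OF m] power_sum_in_centralizer[OF xy s m]]
      by simp
  qed
  show ?thesis
    using le[of i j] le[of j i] by (cases "i \<le> j") (simp_all add: add.commute)
qed

lemma peval_in_centralizer:
  assumes "\<forall>r b. \<phi> r * b = b * \<phi> r" and "z \<in> centralizer a"
  shows "peval \<phi> f z \<in> centralizer a"
  unfolding peval_def
  by (intro centralizer_sum centralizer_mult centralizer_power central_in_centralizer assms)

lemma foldr_powers_cong:
  "(\<And>i. i \<in> set xs \<Longrightarrow> \<alpha> i = \<beta> i) \<Longrightarrow>
   foldr (\<lambda>i acc. t i ^ \<alpha> i * acc) xs 1 = foldr (\<lambda>i acc. t i ^ \<beta> i * acc) xs (1::'a::ring_1)"
  by (induction xs) auto

lemma foldr_powers_extract: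
  fixes t :: "nat \<Rightarrow> 'a::ring_1"
  assumes "distinct xs" "k \<in> set xs" "\<forall>i\<in>set xs. \<forall>j\<in>set xs. t i * t j = t j * t i"
  shows "foldr (\<lambda>i acc. t i ^ \<alpha> i * acc) xs 1
       = t k ^ \<alpha> k * foldr (\<lambda>i acc. t i ^ (\<alpha>(k := 0)) i * acc) xs 1"
  using assms
proof (induction xs)
  case (Cons a xs)
  show ?case
  proof (cases "a = k")
    case True
    then have "k \<notin> set xs"
      using Cons.prems(1) by auto
    then have "foldr (\<lambda>i acc. t i ^ \<alpha> i * acc) xs 1
        = foldr (\<lambda>i acc. t i ^ (\<alpha>(k := 0)) i * acc) xs 1"
      by (intro foldr_powers_cong) auto
    then show ?thesis
      using True by simp
  next
    case False
    then have k: "k \<in> set xs"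
      using Cons.prems(2) by auto
    have IH: "foldr (\<lambda>i acc. t i ^ \<alpha> i * acc) xs 1
        = t k ^ \<alpha> k * foldr (\<lambda>i acc. t i ^ (\<alpha>(k := 0)) i * acc) xs 1"
      using Cons.prems k by (intro Cons.IH) auto
    have "t a * t k = t k * t a"
      using Cons.prems(3) k by (meson list.set_intros)
    then have "t k * t a ^ \<alpha> a = t a ^ \<alpha> a * t k"
      by (rule power_commuting_commutes[symmetric])
    then have comm: "t a ^ \<alpha> a * t k ^ \<alpha> k = t k ^ \<alpha> k * t a ^ \<alpha> a"
      by (rule power_commuting_commutes[symmetric])
    have "foldr (\<lambda>i acc. t i ^ \<alpha> i * acc) (a # xs) 1
        = (t a ^ \<alpha> a * t k ^ \<alpha> k) * foldr (\<lambda>i acc. t i ^ (\<alpha>(k := 0)) i * acc) xs 1"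
      by (simp add: IH mult.assoc)
    also have "\<dots> = t k ^ \<alpha> k * (t a ^ \<alpha> a * foldr (\<lambda>i acc. t i ^ (\<alpha>(k := 0)) i * acc) xs 1)"
      by (simp only: comm mult.assoc)
    finally show ?thesis
      using False by simp
  qed
qed simp

lemma foldr_powers_in_centralizer:
  assumes "\<forall>i\<in>set xs. \<beta> i \<noteq> 0 \<longrightarrow> t i \<in> centralizer a"
  shows "foldr (\<lambda>i acc. t i ^ \<beta> i * acc) xs 1 \<in> centralizer (a::'a::ring_1)"
  using assms
  by (induction xs) (auto intro: centralizer_mult centralizer_power centralizer_one
      simp del: power_eq_0_iff)

lemma monom_t_split:
  fixes t :: "nat \<Rightarrow> 'a::ring_1"
  assumes "\<forall>i\<in>{1..n}. \<forall>j\<in>{1..n}. t i * t j = t j * t i" and "1 \<le> p" "p < n"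
  shows "monom_t n t \<alpha>
       = t p ^ \<alpha> p * (t (Suc p) ^ \<alpha> (Suc p) * monom_t n t (\<alpha>(p := 0, Suc p := 0)))"
proof -
  have tc: "\<forall>i\<in>set [1..<n+1]. \<forall>j\<in>set [1..<n+1]. t i * t j = t j * t i"
    using assms(1) by auto
  have "monom_t n t \<alpha> = t p ^ \<alpha> p * monom_t n t (\<alpha>(p := 0))"
    unfolding monom_t_def using assms(2,3) by (intro foldr_powers_extract[OF _ _ tc]) auto
  also have "monom_t n t (\<alpha>(p := 0))
      = t (Suc p) ^ \<alpha> (Suc p) * monom_t n t (\<alpha>(p := 0, Suc p := 0))"
    unfolding monom_t_def using assms(2,3) by (subst foldr_powers_extract[OF _ _ tc, of "Suc p"]) auto
  finally show ?thesis .
qed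

lemma monom_t_in_centralizer:
  "\<forall>i\<in>{1..n}. \<alpha> i \<noteq> 0 \<longrightarrow> t i \<in> centralizer a \<Longrightarrow> monom_t n t \<alpha> \<in> centralizer a"
  unfolding monom_t_def by (rule foldr_powers_in_centralizer) auto

lemma sum_split_by_involution:
  fixes \<sigma> :: "'x \<Rightarrow> 'x" and k l :: "'x \<Rightarrow> 'o::linorder" and g :: "'x \<Rightarrow> 'b::comm_monoid_add"
  assumes "finite S" and "\<sigma> ` S \<subseteq> S" and "\<And>x. \<sigma> (\<sigma> x) = x"
    and "\<And>x. k (\<sigma> x) = l x" and "\<And>x. l (\<sigma> x) = k x"
  shows "sum g S = sum g {x\<in>S. k x = l x} + (\<Sum>x\<in>{x\<in>S. k x < l x}. g x + g (\<sigma> x))"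
proof -
  let ?E = "{x\<in>S. k x = l x}" and ?L = "{x\<in>S. k x < l x}" and ?G = "{x\<in>S. l x < k x}"
  have "bij_betw \<sigma> ?L ?G"
    using assms(2-5) by (intro bij_betw_byWitness[where f' = \<sigma>]) auto
  then have G: "sum g ?G = (\<Sum>x\<in>?L. g (\<sigma> x))"
    by (simp add: sum.reindex_bij_betw)
  have "S = (?E \<union> ?L) \<union> ?G"
    by auto
  also have "sum g \<dots> = sum g (?E \<union> ?L) + sum g ?G"
    using assms(1) by (intro sum.union_disjoint) auto
  also have "sum g (?E \<union> ?L) = sum g ?E + sum g ?L"
    using assms(1) by (intro sum.union_disjoint) auto
  finally have "sum g S = sum g ?E + sum g ?L + sum g ?G" .
  then show ?thesis
    by (simp add: G sum.distrib add.assoc)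
qed

lemma swap_exp_apply: "swap_exp p \<alpha> p = \<alpha> (Suc p)" "swap_exp p \<alpha> (Suc p) = \<alpha> p"
  by (simp_all add: swap_exp_def)

lemma swap_exp_swap_exp [simp]: "swap_exp p (swap_exp p \<alpha>) = \<alpha>"
  by (auto simp: swap_exp_def)

lemma swap_exp_red_exps: "1 \<le> p \<Longrightarrow> p < n \<Longrightarrow> swap_exp p ` red_exps n r \<subseteq> red_exps n r"
  by (auto simp: swap_exp_def red_exps_def)

lemma swap_exp_reset: "(swap_exp p \<alpha>)(p := 0, Suc p := 0) = \<alpha>(p := 0, Suc p := 0)"
  by (auto simp: swap_exp_def)

lemma swap_invariant_elem_t_in_centralizer:
  fixes t :: "nat \<Rightarrow> 'a::ring_1" and T :: 'a
  assumes central: "\<forall>s b. \<phi> s * b = b * \<phi> s"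
    and tcomm: "\<forall>i\<in>{1..n}. \<forall>j\<in>{1..n}. t i * t j = t j * t i"
    and others: "\<forall>k\<in>{1..n}. k \<noteq> p \<and> k \<noteq> Suc p \<longrightarrow> t k \<in> centralizer T"
    and sum: "t p + t (Suc p) \<in> centralizer T" and prod: "t p * t (Suc p) \<in> centralizer T"
    and p: "1 \<le> p" "p < n"
    and inv: "\<forall>\<alpha>\<in>red_exps n r. c (swap_exp p \<alpha>) = c \<alpha>"
  shows "elem_t n r \<phi> t c \<in> centralizer T"
proof (cases "finite (red_exps n r)")
  case False
  then show ?thesis
    by (simp add: elem_t_def centralizer_def)
next
  case True
  define x y where "x = t p" and "y = t (Suc p)"
  define m where "m \<alpha> = monom_t n t (\<alpha>(p := 0, Suc p := 0))" for \<alpha>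
  define g where "g \<alpha> = \<phi> (c \<alpha>) * monom_t n t \<alpha>" for \<alpha>
  have xy: "x * y = y * x"
    unfolding x_def y_def by (rule tcomm[rule_format]) (use p in auto)
  have split: "monom_t n t \<alpha> = x ^ \<alpha> p * (y ^ \<alpha> (Suc p) * m \<alpha>)" for \<alpha>
    unfolding x_def y_def m_def using monom_t_split[OF tcomm p] .
  have m_swap: "m (swap_exp p \<alpha>) = m \<alpha>" for \<alpha>
    unfolding m_def swap_exp_reset ..
  have m: "m \<alpha> \<in> centralizer T" for \<alpha>
    unfolding m_def using others by (intro monom_t_in_centralizer) auto
  note coeff = central_in_centralizer[OF central]
  have diag: "g \<alpha> \<in> centralizer T" if "\<alpha> p = \<alpha> (Suc p)" for \<alpha>
  proof -
    have "g \<alpha> = \<phi> (c \<alpha>) * ((x * y) ^ \<alpha> p * m \<alpha>)"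
      unfolding g_def split power_mult_distrib_commuting[OF xy] that by (simp add: mult.assoc)
    then show ?thesis
      using coeff m prod unfolding x_def y_def by (simp add: centralizer_mult centralizer_power)
  qed
  have pair: "g \<alpha> + g (swap_exp p \<alpha>) \<in> centralizer T" if "\<alpha> \<in> red_exps n r" for \<alpha>
  proof -
    have "g \<alpha> + g (swap_exp p \<alpha>)
        = \<phi> (c \<alpha>) * ((x ^ \<alpha> p * y ^ \<alpha> (Suc p) + x ^ \<alpha> (Suc p) * y ^ \<alpha> p) * m \<alpha>)"
      unfolding g_def split m_swap swap_exp_apply inv[rule_format, OF that]
      by (simp add: distrib_left distrib_right mult.assoc)
    then show ?thesis
      using symmetric_monomial_in_centralizer[OF xy sum[folded x_def y_def] prod[folded x_def y_def]]
      by (simp add: centralizer_mult coeff m)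
  qed
  have "elem_t n r \<phi> t c = sum g {\<alpha> \<in> red_exps n r. \<alpha> p = \<alpha> (Suc p)}
      + (\<Sum>\<alpha>\<in>{\<alpha> \<in> red_exps n r. \<alpha> p < \<alpha> (Suc p)}. g \<alpha> + g (swap_exp p \<alpha>))"
    unfolding elem_t_def g_def[symmetric]
    by (rule sum_split_by_involution[OF True swap_exp_red_exps[OF p]]) (simp_all add: swap_exp_apply)
  then show ?thesis
    by (auto intro!: centralizer_add centralizer_sum diag pair)
qed

lemma corr_in_centralizer:
  assumes "\<forall>s b. \<phi> s * b = b * \<phi> s"
    and "t (j - 1) \<in> centralizer a" and "t j \<in> centralizer a"
  shows "corr \<phi> r q u t j \<in> centralizer a"
  unfolding corr_def
  by (intro centralizer_sum centralizer_mult central_in_centralizer peval_in_centralizer assms)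

lemma shoji_rels_sum_prod_in_centralizer:
  assumes "shoji_rels n r q u \<phi> t T" and "1 \<le> p" "p < n"
  shows "t p + t (Suc p) \<in> centralizer (T p)" and "t p * t (Suc p) \<in> centralizer (T p)"
proof -
  have central: "\<forall>s b. \<phi> s * b = b * \<phi> s"
    and tcomm: "\<forall>i\<in>{1..n}. \<forall>j\<in>{1..n}. t i * t j = t j * t i"
    and mixed1: "\<forall>j\<in>{2..n}. T (j-1) * t j = t (j-1) * T (j-1) + corr \<phi> r q u t j"
    and mixed2: "\<forall>j\<in>{2..n}. T (j-1) * t (j-1) = t j * T (j-1) - corr \<phi> r q u t j"
    using assms(1) unfolding shoji_rels_def central_hom_def by - (elim conjE, assumption)+
  define C where "C = corr \<phi> r q u t (Suc p)"
  have Ty: "T p * t (Suc p) = t p * T p + C" and Tx: "T p * t p = t (Suc p) * T p - C"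
    using mixed1[rule_format, of "Suc p"] mixed2[rule_format, of "Suc p"] assms(2,3)
    unfolding C_def by simp_all
  have tp: "t p * t (Suc p) = t (Suc p) * t p"
    by (rule tcomm[rule_format]) (use assms(2,3) in auto)
  then have "C \<in> centralizer (t (Suc p))"
    unfolding C_def by (intro corr_in_centralizer[OF central]) (simp_all add: centralizer_iff)
  then have "t (Suc p) * C = C * t (Suc p)"
    by (simp add: centralizer_iff)
  then show "t p + t (Suc p) \<in> centralizer (T p)" "t p * t (Suc p) \<in> centralizer (T p)"
    using sum_prod_in_centralizer_of_twisted[OF tp Ty Tx] by simp_all
qed

theorem lemma2p6:
  fixes n r p :: nat and q :: "'r::idom" and u :: "nat \<Rightarrow> 'r"
    and c :: "(nat \<Rightarrow> nat) \<Rightarrow> 'r"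
    and \<phi> :: "'r \<Rightarrow> 'a::ring_1" and t T :: "nat \<Rightarrow> 'a"
  assumes "n \<ge> 2" and "r \<ge> 1"
    and "q dvd 1" and "Delta r u dvd 1"
    and "1 \<le> p" and "p \<le> n - 1"
    and "\<forall>\<alpha>\<in>red_exps n r. c (swap_exp p \<alpha>) = c \<alpha>"
    and "shoji_rels n r q u \<phi> t T"
  shows "T p * elem_t n r \<phi> t c = elem_t n r \<phi> t c * T p"
proof -
  have central: "\<forall>s b. \<phi> s * b = b * \<phi> s"
    and tcomm: "\<forall>i\<in>{1..n}. \<forall>j\<in>{1..n}. t i * t j = t j * t i"
    and Tt: "\<forall>j\<in>{1..<n}. \<forall>k\<in>{1..n}. k \<noteq> j \<and> k \<noteq> j + 1 \<longrightarrow> T j * t k = t k * T j"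
    using assms(8) unfolding shoji_rels_def central_hom_def by - (elim conjE, assumption)+
  have p: "1 \<le> p" "p < n"
    using assms(1,5,6) by auto
  have "\<forall>k\<in>{1..n}. k \<noteq> p \<and> k \<noteq> Suc p \<longrightarrow> t k \<in> centralizer (T p)"
    using Tt p by (simp add: centralizer_iff)
  then have "elem_t n r \<phi> t c \<in> centralizer (T p)"
    using shoji_rels_sum_prod_in_centralizer[OF assms(8) p]
    by (intro swap_invariant_elem_t_in_centralizer[OF central tcomm _ _ _ p assms(7)])
  then show ?thesis
    by (simp add: centralizer_iff)
qed

end
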